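(* For $\mu\in[\frac13,1)$ there exists a solution $f_\mu$ of $$(\mu-1)f_\mu(\xi)-\mu\,\xi f_\mu'(\xi)=f_\mu''(\xi),\qquad \xi\ge 0,$$ such that $f_\mu(0)=0$ and $f_\mu(\xi)\to 0$ as $\xi\to\infty$. This solution is positive, and: if $\mu\in(\frac13,1)$ then $f_\mu(\xi)=O(\xi^{1-\frac1\mu})$ as $\xi\to\infty$; for $\mu=\frac13$, $f_{1/3}(\xi)=\xi e^{-\xi^2/6}$. *)

theory Defs
  imports "HOL-Analysis.Analysis"
begin

end

(*
  For mu > 1/3 put a = 1/(2 mu). The solution is f(xi) = xi * M(a, 3/2, -mu xi^2/2), where Kummer's
  function is taken in Euler's integral form: up to a constant factor,
  M(a, b, -x) = integral over [0,1] of s^(a-1) (1-s)^(b-a-1) exp(-x s) ds.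
  Differentiating under the integral sign and integrating by parts give Kummer's equation
  z w'' + (b - z) w' = a w for w(z) = M(a, b, z) on z <= 0, and for b = 3/2 the substitution
  z = -mu xi^2/2 turns it into the equation for xi * M. Positivity is read off from the integral,
  and splitting the integral at s = 1/2 shows M(a, b, -x) = O(x^(-a)), whence
  f(xi) = O(xi^(1-2a)) = O(xi^(1-1/mu)).
  At mu = 1/3 we have b - a - 1 = -1, the Euler integral diverges, and f(xi) = xi exp(-xi^2/6)
  (that is, M(b, b, -x) = exp(-x)) is checked directly.
*)

theory Submission
  imports Defs "HOL-Real_Asymp.Real_Asymp"
begin

lemma abs_exp_minus_one_minus_le_square:
  fixes z :: real
  assumes "\<bar>z\<bar> \<le> 1"
  shows "\<bar>exp z - 1 - z\<bar> \<le> z\<^sup>2"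
proof -
  have "exp z \<le> 1 + z + z\<^sup>2"
  proof (cases "0 \<le> z")
    case True
    then show ?thesis using exp_bound[of z] assms by simp
  next
    case False
    have "1 - z \<le> exp (- z)" using exp_ge_add_one_self[of "- z"] by simp
    then have "exp z \<le> 1 / (1 - z)" using False by (simp add: exp_minus field_simps)
    also have "\<dots> \<le> 1 + z + z\<^sup>2"
      using False by (simp add: field_simps power2_eq_square mult_nonpos_nonneg)
    finally show ?thesis .
  qed
  moreover have "0 \<le> exp z - 1 - z"
    using exp_ge_add_one_self[of z] by linarith
  ultimately show ?thesis by (simp add: abs_of_nonneg)
qed

lemma abs_exp_neg_mult_remainder_le:
  fixes x y s :: real
  assumes "0 \<le> x" "\<bar>y - x\<bar> \<le> 1" "s \<in> {0..1}"
  shows "\<bar>exp (- (y * s)) - exp (- (x * s)) + (y - x) * s * exp (- (x * s))\<bar> \<le> (y - x)\<^sup>2"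
proof -
  define z where "z = - ((y - x) * s)"
  have z: "\<bar>z\<bar> \<le> 1"
    using assms by (auto simp: z_def abs_mult intro: mult_le_one)
  have "exp (- (y * s)) = exp (- (x * s)) * exp z"
    by (simp add: z_def algebra_simps flip: exp_add)
  then have "exp (- (y * s)) - exp (- (x * s)) + (y - x) * s * exp (- (x * s))
      = exp (- (x * s)) * (exp z - 1 - z)"
    by (simp add: z_def algebra_simps)
  then have "\<bar>exp (- (y * s)) - exp (- (x * s)) + (y - x) * s * exp (- (x * s))\<bar>
      = exp (- (x * s)) * \<bar>exp z - 1 - z\<bar>"
    by (simp add: abs_mult)
  also have "\<dots> \<le> 1 * z\<^sup>2"
    using assms abs_exp_minus_one_minus_le_square[OF z] by (intro mult_mono) auto
  also have "\<dots> \<le> (y - x)\<^sup>2"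
    using assms by (simp add: z_def power_mult_distrib mult_left_le power_le_one)
  finally show ?thesis .
qed

lemma exp_neg_le_powr:
  fixes y a :: real
  assumes "0 \<le> y" "1 \<le> a"
  shows "exp (- y) \<le> a powr a * (1 + y) powr (- a)"
proof -
  have "(1 + y / a) powr a \<le> exp (y / a) powr a"
    using assms by (intro powr_mono2 exp_ge_add_one_self) auto
  also have "\<dots> = exp y"
    using assms by (simp add: exp_powr_real)
  finally have exp_bound: "(1 + y / a) powr a \<le> exp y" .
  have "1 + y \<le> a * (1 + y / a)"
    using assms by (simp add: field_simps)
  then have "(1 + y) powr a \<le> (a * (1 + y / a)) powr a"
    using assms by (intro powr_mono2) auto
  also have "\<dots> = a powr a * (1 + y / a) powr a"
    using assms by (simp add: powr_mult)
  also have "\<dots> \<le> a powr a * exp y"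
    using exp_bound by (intro mult_left_mono) auto
  finally have "(1 + y) powr a \<le> a powr a * exp y" .
  then show ?thesis
    using assms by (simp add: exp_minus powr_minus field_simps)
qed

lemma has_integral_powr_mult_linear_powr:
  fixes p x :: real
  assumes "-1 < p" "0 \<le> x"
  shows "((\<lambda>s. s powr p * (1 + x * s) powr (- (p + 2))) has_integral (1 + x) powr (- (p + 1)) / (p + 1)) {0..1}"
proof -
  define F where "F s = s powr (p + 1) * (1 + x * s) powr (- (p + 1)) / (p + 1)" for s
  have pos: "0 < 1 + x * s" if "0 \<le> s" for s
    using assms that by (simp add: add_pos_nonneg)
  have "((\<lambda>s. s powr p * (1 + x * s) powr (- (p + 2))) has_integral (F 1 - F 0)) {0..1}"
  proof (rule fundamental_theorem_of_calculus_interior)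
    show "continuous_on {0..1} F"
      unfolding F_def using assms pos
      by (intro continuous_intros continuous_on_powr') (auto simp: order_less_imp_not_eq2)
    fix s :: real
    assume s: "s \<in> {0<..<1}"
    have "((\<lambda>s. 1 + x * s) has_real_derivative x) (at s)"
      by (auto intro!: derivative_eq_intros)
    from DERIV_fun_powr[OF this pos[of s], of "- (p + 1)"]
    have "((\<lambda>s. (1 + x * s) powr (- (p + 1))) has_real_derivative
        - (p + 1) * (1 + x * s) powr (- (p + 2)) * x) (at s)"
      using s by (simp add: algebra_simps)
    moreover have "((\<lambda>s. s powr (p + 1)) has_real_derivative (p + 1) * s powr p) (at s)"
      using has_real_derivative_powr[of s "p + 1"] s by simp
    ultimately have "(F has_real_derivative
        ((p + 1) * s powr p * (1 + x * s) powr (- (p + 1))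
          + (- (p + 1) * (1 + x * s) powr (- (p + 2)) * x) * s powr (p + 1)) / (p + 1)) (at s)"
      unfolding F_def by (intro DERIV_cdivide DERIV_mult)
    also have "s powr (p + 1) = s powr p * s"
      using s powr_mult_base[of s p] by (simp add: mult.commute add.commute)
    also have "(1 + x * s) powr (- (p + 1)) = (1 + x * s) powr (- (p + 2)) * (1 + x * s)"
      using pos[of s] powr_mult_base[of "1 + x * s" "- (p + 2)"] s by (simp add: algebra_simps)
    also have "((p + 1) * s powr p * ((1 + x * s) powr (- (p + 2)) * (1 + x * s))
          + (- (p + 1) * (1 + x * s) powr (- (p + 2)) * x) * (s powr p * s)) / (p + 1)
        = s powr p * (1 + x * s) powr (- (p + 2))"
      using assms by (simp add: field_simps)
    finally have "(F has_real_derivative s powr p * (1 + x * s) powr (- (p + 2))) (at s)" .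
    then show "(F has_vector_derivative s powr p * (1 + x * s) powr (- (p + 2))) (at s)"
      by (simp add: has_real_derivative_iff_has_vector_derivative)
  qed simp
  then show ?thesis
    using assms by (simp add: F_def add.commute)
qed

lemma has_real_derivative_of_quadratic_remainder:
  fixes f :: "real \<Rightarrow> real"
  assumes "0 < \<delta>"
    and "\<And>y. y \<in> S \<Longrightarrow> \<bar>y - x\<bar> < \<delta> \<Longrightarrow> \<bar>f y - f x - D * (y - x)\<bar> \<le> C * (y - x)\<^sup>2"
  shows "(f has_real_derivative D) (at x within S)"
proof -
  have "\<forall>\<^sub>F y in at x within S. y \<in> S \<and> y \<noteq> x \<and> \<bar>y - x\<bar> < \<delta>"
    unfolding eventually_at by (rule exI[of _ \<delta>]) (use assms(1) in \<open>simp add: dist_real_def\<close>)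
  then have "\<forall>\<^sub>F y in at x within S. norm ((f y - f x) / (y - x) - D) \<le> C * \<bar>y - x\<bar>"
  proof eventually_elim
    case (elim y)
    then have "norm ((f y - f x) / (y - x) - D) = \<bar>f y - f x - D * (y - x)\<bar> / \<bar>y - x\<bar>"
      by (simp add: diff_divide_distrib flip: abs_divide)
    also have "\<dots> \<le> C * (y - x)\<^sup>2 / \<bar>y - x\<bar>"
      using assms(2) elim by (intro divide_right_mono) auto
    also have "\<dots> = C * \<bar>y - x\<bar>"
      using elim by (simp add: field_simps power2_eq_square)
    finally show ?case .
  qed
  moreover have "((\<lambda>y. C * \<bar>y - x\<bar>) \<longlongrightarrow> 0) (at x within S)"
    by (intro tendsto_eq_intros) auto
  ultimately have "((\<lambda>y. (f y - f x) / (y - x) - D) \<longlongrightarrow> 0) (at x within S)"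
    by (rule Lim_null_comparison)
  then show ?thesis
    unfolding has_field_derivative_iff by (simp flip: Lim_null)
qed

locale beta_weight =
  fixes p q :: real
  assumes p_gt: "-1 < p" and q_gt: "-1 < q"
begin

definition weight :: "real \<Rightarrow> real" where
  "weight s = s powr p * (1 - s) powr q"

text \<open>By Euler's integral representation of Kummer's function,
  \<open>moment 0 x = B(p + 1, q + 1) M(p + 1, p + q + 2, -x)\<close>.\<close>

definition moment :: "nat \<Rightarrow> real \<Rightarrow> real" where
  "moment k x = integral {0..1} (\<lambda>s. s ^ k * exp (- (x * s)) * weight s)"

lemma weight_nonneg: "0 \<le> weight s"
  by (simp add: weight_def)

lemma weight_absolutely_integrable: "weight absolutely_integrable_on {0..1}"
proof -
  have "weight = (\<lambda>t. t powr (p + 1 - 1) * (1 - t) powr (q + 1 - 1))"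
    by (simp add: fun_eq_iff weight_def)
  then have "weight integrable_on {0..1}"
    using integrable_Beta'[of "p + 1" "q + 1"] p_gt q_gt by simp
  then show ?thesis
    by (simp add: absolutely_integrable_on_iff_nonneg weight_nonneg)
qed

lemma continuous_mult_weight_integrable:
  assumes "continuous_on {0..1} h"
  shows "(\<lambda>s. h s * weight s) integrable_on {0..1}"
proof -
  have "bounded (h ` {0..1})"
    using assms by (intro compact_imp_bounded compact_continuous_image) auto
  then have "(\<lambda>s. h s * weight s) absolutely_integrable_on {0..1}"
    using assms weight_absolutely_integrable
    by (intro absolutely_integrable_bounded_measurable_product_real
        continuous_imp_measurable_on_sets_lebesgue) auto
  then show ?thesis
    using set_lebesgue_integral_eq_integral(1) by blast
qed

lemma has_integral_moment:
  "((\<lambda>s. s ^ k * exp (- (x * s)) * weight s) has_integral moment k x) {0..1}"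
  unfolding moment_def
  by (intro integrable_integral continuous_mult_weight_integrable continuous_intros)

lemma abs_moment_remainder_le:
  assumes "0 \<le> x" "\<bar>y - x\<bar> \<le> 1"
  shows "\<bar>moment k y - moment k x + (y - x) * moment (Suc k) x\<bar> \<le> integral {0..1} weight * (y - x)\<^sup>2"
proof -
  let ?r = "\<lambda>s. exp (- (y * s)) - exp (- (x * s)) + (y - x) * s * exp (- (x * s))"
  have "((\<lambda>s. s ^ k * exp (- (y * s)) * weight s - s ^ k * exp (- (x * s)) * weight s
      + (y - x) * (s ^ Suc k * exp (- (x * s)) * weight s)) has_integral
      moment k y - moment k x + (y - x) * moment (Suc k) x) {0..1}"
    by (intro has_integral_add has_integral_diff has_integral_mult_right has_integral_moment)
  moreover have "(\<lambda>s. s ^ k * exp (- (y * s)) * weight s - s ^ k * exp (- (x * s)) * weight s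
      + (y - x) * (s ^ Suc k * exp (- (x * s)) * weight s)) = (\<lambda>s. s ^ k * ?r s * weight s)"
    by (simp add: fun_eq_iff algebra_simps)
  ultimately have int_r: "((\<lambda>s. s ^ k * ?r s * weight s) has_integral
      moment k y - moment k x + (y - x) * moment (Suc k) x) {0..1}"
    by simp
  have int_w: "((\<lambda>s. (y - x)\<^sup>2 * weight s) has_integral (y - x)\<^sup>2 * integral {0..1} weight) {0..1}"
    using weight_absolutely_integrable
    by (intro has_integral_mult_right integrable_integral) (simp add: absolutely_integrable_on_def)
  have "norm (s ^ k * ?r s * weight s) \<le> (y - x)\<^sup>2 * weight s" if "s \<in> {0..1}" for s
  proof -
    have "norm (s ^ k * ?r s * weight s) = s ^ k * \<bar>?r s\<bar> * weight s"
      using that weight_nonneg[of s] by (simp add: abs_mult)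
    also have "\<dots> \<le> 1 * (y - x)\<^sup>2 * weight s"
      using that assms abs_exp_neg_mult_remainder_le[of x y s] weight_nonneg[of s]
      by (intro mult_right_mono mult_mono power_le_one) auto
    finally show ?thesis by simp
  qed
  with has_integral_norm_bound_integral_component[OF int_r int_w, of 1] show ?thesis
    by (simp add: mult.commute)
qed

lemma has_real_derivative_moment:
  assumes "0 \<le> x"
  shows "(moment k has_real_derivative - moment (Suc k) x) (at x within {0..})"
proof (rule has_real_derivative_of_quadratic_remainder[of 1])
  fix y :: real
  assume "y \<in> {0..}" "\<bar>y - x\<bar> < 1"
  then show "\<bar>moment k y - moment k x - - moment (Suc k) x * (y - x)\<bar>
      \<le> integral {0..1} weight * (y - x)\<^sup>2"
    using abs_moment_remainder_le[of x y k] assms by (simp add: mult.commute)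
qed simp

lemma has_real_derivative_moment_quadratic:
  assumes "0 \<le> \<beta>" "0 \<le> \<xi>"
  shows "((\<lambda>\<xi>. moment k (\<beta> * \<xi>\<^sup>2)) has_real_derivative
    - moment (Suc k) (\<beta> * \<xi>\<^sup>2) * (2 * \<beta> * \<xi>)) (at \<xi> within {0..})"
proof -
  have "(moment k has_real_derivative - moment (Suc k) (\<beta> * \<xi>\<^sup>2))
      (at (\<beta> * \<xi>\<^sup>2) within (\<lambda>\<xi>. \<beta> * \<xi>\<^sup>2) ` {0..})"
    using assms by (intro DERIV_subset[OF has_real_derivative_moment]) auto
  moreover have "((\<lambda>\<xi>. \<beta> * \<xi>\<^sup>2) has_real_derivative 2 * \<beta> * \<xi>) (at \<xi> within {0..})"
    by (auto intro!: derivative_eq_intros)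
  ultimately show ?thesis
    by (rule DERIV_image_chain[unfolded o_def])
qed

text \<open>The integrand of the left-hand side is the derivative of
  \<open>s powr (p + 1) * (1 - s) powr (q + 1) * exp (- x * s)\<close>, which vanishes at both ends.\<close>

lemma moment_kummer_identity:
  "(p + 1) * moment 0 x - (p + q + 2 + x) * moment 1 x + x * moment 2 x = 0"
proof -
  define H where "H s = s powr (p + 1) * (1 - s) powr (q + 1) * exp (- (x * s))" for s
  define h where "h s = (p + 1) * (s ^ 0 * exp (- (x * s)) * weight s)
    - (p + q + 2 + x) * (s ^ 1 * exp (- (x * s)) * weight s) + x * (s ^ 2 * exp (- (x * s)) * weight s)"
    for s
  have "(h has_integral H 1 - H 0) {0..1}"
  proof (rule fundamental_theorem_of_calculus_interior)
    show "continuous_on {0..1} H"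
      unfolding H_def using p_gt q_gt by (intro continuous_intros continuous_on_powr') auto
    fix s :: real
    assume s: "s \<in> {0<..<1}"
    have "((\<lambda>s. 1 - s) has_real_derivative - 1) (at s)"
      by (auto intro!: derivative_eq_intros)
    from DERIV_fun_powr[OF this, of "q + 1"]
    have "((\<lambda>s. (1 - s) powr (q + 1)) has_real_derivative - ((q + 1) * (1 - s) powr q)) (at s)"
      using s by simp
    moreover have "((\<lambda>s. s powr (p + 1)) has_real_derivative (p + 1) * s powr p) (at s)"
      using has_real_derivative_powr[of s "p + 1"] s by simp
    ultimately have "(H has_real_derivative
        ((p + 1) * s powr p * (1 - s) powr (q + 1) + - ((q + 1) * (1 - s) powr q) * s powr (p + 1))
          * exp (- (x * s)) + exp (- (x * s)) * - x * (s powr (p + 1) * (1 - s) powr (q + 1))) (at s)"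
      unfolding H_def by (intro DERIV_mult DERIV_fun_exp) (auto intro!: derivative_eq_intros)
    also have "s powr (p + 1) = s powr p * s"
      using s powr_mult_base[of s p] by (simp add: mult.commute add.commute)
    also have "(1 - s) powr (q + 1) = (1 - s) powr q * (1 - s)"
      using s powr_mult_base[of "1 - s" q] by (simp add: mult.commute add.commute)
    also have "((p + 1) * s powr p * ((1 - s) powr q * (1 - s)) + - ((q + 1) * (1 - s) powr q) * (s powr p * s))
          * exp (- (x * s)) + exp (- (x * s)) * - x * (s powr p * s * ((1 - s) powr q * (1 - s))) = h s"
      by (simp add: h_def weight_def algebra_simps power2_eq_square)
    finally show "(H has_vector_derivative h s) (at s)"
      by (simp add: has_real_derivative_iff_has_vector_derivative)
  qed simp
  moreover have "(h has_integral (p + 1) * moment 0 x - (p + q + 2 + x) * moment 1 x + x * moment 2 x) {0..1}"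
    unfolding h_def by (intro has_integral_add has_integral_diff has_integral_mult_right has_integral_moment)
  moreover have "H 1 - H 0 = 0"
    using p_gt q_gt by (simp add: H_def)
  ultimately show ?thesis
    using has_integral_unique by metis
qed

lemma moment_pos: "0 < moment k x"
proof -
  define P Q where "P = max p 1" and "Q = max q 1"
  let ?h = "\<lambda>s. s ^ k * exp (- (x * s)) * (s powr P * (1 - s) powr Q)"
  have "integral {0..1} (\<lambda>_::real. 0) < integral {0..1} ?h"
  proof (rule integral_less_real)
    show "continuous_on {0..1} ?h"
      by (intro continuous_intros continuous_on_powr') (auto simp: P_def Q_def)
  qed (auto simp: P_def Q_def)
  also have "\<dots> \<le> moment k x"
    unfolding moment_def
  proof (rule integral_le)
    show "?h integrable_on {0..1}"
      by (intro integrable_continuous_real continuous_intros continuous_on_powr') (auto simp: P_def Q_def)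
    show "(\<lambda>s. s ^ k * exp (- (x * s)) * weight s) integrable_on {0..1}"
      using has_integral_moment by blast
    fix s :: real
    assume s: "s \<in> {0..1}"
    then have "s powr P * (1 - s) powr Q \<le> weight s"
      unfolding weight_def P_def Q_def by (intro mult_mono powr_mono') auto
    with s show "?h s \<le> s ^ k * exp (- (x * s)) * weight s"
      by (intro mult_left_mono) auto
  qed
  finally show ?thesis by simp
qed

lemma moment_zero_le:
  assumes "0 \<le> x"
  shows "moment 0 x \<le> 2 * (p + 2) powr (p + 2) * ((1 + x) powr (- (p + 1)) / (p + 1))
    + exp (- x / 2) * integral {0..1} weight"
proof -
  define C where "C = (p + 2) powr (p + 2)"
  have int_near: "((\<lambda>s. 2 * C * (s powr p * (1 + x * s) powr (- (p + 2)))) has_integral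
      2 * C * ((1 + x) powr (- (p + 1)) / (p + 1))) {0..1}"
    using p_gt assms by (intro has_integral_mult_right has_integral_powr_mult_linear_powr)
  have int_far: "((\<lambda>s. exp (- x / 2) * weight s) has_integral exp (- x / 2) * integral {0..1} weight) {0..1}"
    using weight_absolutely_integrable
    by (intro has_integral_mult_right integrable_integral) (simp add: absolutely_integrable_on_def)
  have integrand_le: "exp (- (x * s)) * weight s
      \<le> 2 * C * (s powr p * (1 + x * s) powr (- (p + 2))) + exp (- x / 2) * weight s"
    if s: "s \<in> {0..1}" for s
  proof (cases "s \<le> 1/2")
    case True
    have "(1 - s) powr q \<le> (1 - s) powr (- 1)"
      using s True q_gt by (intro powr_mono') auto
    also have "\<dots> \<le> 2"
      using True by (simp add: powr_minus field_simps)
    finally have "(1 - s) powr q \<le> 2" .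
    moreover have "exp (- (x * s)) \<le> C * (1 + x * s) powr (- (p + 2))"
      unfolding C_def using exp_neg_le_powr[of "x * s" "p + 2"] s assms p_gt by simp
    ultimately have "(1 - s) powr q * exp (- (x * s)) \<le> 2 * (C * (1 + x * s) powr (- (p + 2)))"
      by (intro mult_mono) auto
    then have "s powr p * ((1 - s) powr q * exp (- (x * s)))
        \<le> s powr p * (2 * (C * (1 + x * s) powr (- (p + 2))))"
      by (rule mult_left_mono) simp
    then have "exp (- (x * s)) * weight s \<le> s powr p * (2 * (C * (1 + x * s) powr (- (p + 2))))"
      by (simp add: weight_def ac_simps)
    moreover have "0 \<le> exp (- x / 2) * weight s"
      using weight_nonneg by simp
    ultimately show ?thesis
      by (simp add: algebra_simps)
  next
    case False
    then have "x * (1/2) \<le> x * s"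
      using assms by (intro mult_left_mono) auto
    then have "exp (- (x * s)) \<le> exp (- x / 2)"
      by simp
    then have "exp (- (x * s)) * weight s \<le> exp (- x / 2) * weight s"
      using weight_nonneg by (rule mult_right_mono)
    moreover have "0 \<le> 2 * C * (s powr p * (1 + x * s) powr (- (p + 2)))"
      by (simp add: C_def)
    ultimately show ?thesis
      by linarith
  qed
  show ?thesis
    unfolding C_def[symmetric]
    by (rule has_integral_le[OF has_integral_moment has_integral_add[OF int_near int_far]])
      (use integrand_le in simp)
qed

lemma moment_zero_bigo: "moment 0 \<in> O[at_top](\<lambda>x. x powr - (p + 1))"
proof -
  let ?bound = "\<lambda>x. 2 * (p + 2) powr (p + 2) * ((1 + x) powr (- (p + 1)) / (p + 1))
    + exp (- x / 2) * integral {0..1} weight"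
  have "\<forall>\<^sub>F x in at_top. norm (moment 0 x) \<le> norm (?bound x)"
    using eventually_ge_at_top[of 0]
  proof eventually_elim
    case (elim x)
    then show ?case
      using moment_zero_le[of x] moment_pos[of 0 x] by simp
  qed
  then have "moment 0 \<in> O[at_top](?bound)"
    by (rule landau_o.big_mono)
  moreover have "(\<lambda>x. A * ((1 + x) powr - (p + 1) / (p + 1)) + exp (- x / 2) * B)
      \<in> O[at_top](\<lambda>x. x powr - (p + 1))" for A B
    using p_gt by real_asymp
  ultimately show ?thesis
    by (rule landau_o.big_trans)
qed

definition profile :: "real \<Rightarrow> real \<Rightarrow> real" where
  "profile \<beta> \<xi> = \<xi> * moment 0 (\<beta> * \<xi>\<^sup>2)"

lemma profile_pos: "0 < \<xi> \<Longrightarrow> 0 < profile \<beta> \<xi>"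
  using moment_pos by (simp add: profile_def)

lemma has_real_derivative_profile:
  assumes "0 \<le> \<beta>" "0 \<le> \<xi>"
  shows "(profile \<beta> has_real_derivative
    moment 0 (\<beta> * \<xi>\<^sup>2) - 2 * \<beta> * \<xi>\<^sup>2 * moment 1 (\<beta> * \<xi>\<^sup>2)) (at \<xi> within {0..})"
proof -
  have "((\<lambda>\<xi>. \<xi> * moment 0 (\<beta> * \<xi>\<^sup>2)) has_real_derivative
      1 * moment 0 (\<beta> * \<xi>\<^sup>2) + - moment (Suc 0) (\<beta> * \<xi>\<^sup>2) * (2 * \<beta> * \<xi>) * \<xi>) (at \<xi> within {0..})"
    by (rule DERIV_mult[OF DERIV_ident has_real_derivative_moment_quadratic[OF assms]])
  then show ?thesis
    unfolding profile_def[abs_def] by (simp add: algebra_simps power2_eq_square)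
qed

lemma has_real_derivative_profile_derivative:
  assumes "0 \<le> \<beta>" "0 \<le> \<xi>"
  shows "((\<lambda>\<xi>. moment 0 (\<beta> * \<xi>\<^sup>2) - 2 * \<beta> * \<xi>\<^sup>2 * moment 1 (\<beta> * \<xi>\<^sup>2)) has_real_derivative
    4 * \<beta>\<^sup>2 * \<xi>^3 * moment 2 (\<beta> * \<xi>\<^sup>2) - 6 * \<beta> * \<xi> * moment 1 (\<beta> * \<xi>\<^sup>2)) (at \<xi> within {0..})"
proof -
  have d0: "((\<lambda>\<xi>. moment 0 (\<beta> * \<xi>\<^sup>2)) has_real_derivative
      - moment 1 (\<beta> * \<xi>\<^sup>2) * (2 * \<beta> * \<xi>)) (at \<xi> within {0..})"
    using has_real_derivative_moment_quadratic[OF assms, of 0] by simp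
  have d1: "((\<lambda>\<xi>. moment 1 (\<beta> * \<xi>\<^sup>2)) has_real_derivative
      - moment 2 (\<beta> * \<xi>\<^sup>2) * (2 * \<beta> * \<xi>)) (at \<xi> within {0..})"
    using has_real_derivative_moment_quadratic[OF assms, of 1] by (simp only: Suc_1)
  have "((\<lambda>\<xi>. 2 * \<beta> * \<xi>\<^sup>2) has_real_derivative 4 * \<beta> * \<xi>) (at \<xi> within {0..})"
    by (auto intro!: derivative_eq_intros)
  from DERIV_diff[OF d0 DERIV_mult[OF this d1]] show ?thesis
    by (rule DERIV_cong) (simp add: algebra_simps power2_eq_square power3_eq_cube)
qed

lemma profile_ode:
  assumes "p + q = - 1/2"
  shows "4 * \<beta>\<^sup>2 * \<xi>^3 * moment 2 (\<beta> * \<xi>\<^sup>2) - 6 * \<beta> * \<xi> * moment 1 (\<beta> * \<xi>\<^sup>2)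
    = 2 * \<beta> * (1 - 2 * (p + 1)) * profile \<beta> \<xi>
      - 2 * \<beta> * \<xi> * (moment 0 (\<beta> * \<xi>\<^sup>2) - 2 * \<beta> * \<xi>\<^sup>2 * moment 1 (\<beta> * \<xi>\<^sup>2))"
proof -
  have "4 * \<beta> * \<xi> * ((p + 1) * moment 0 (\<beta> * \<xi>\<^sup>2) - (p + q + 2 + \<beta> * \<xi>\<^sup>2) * moment 1 (\<beta> * \<xi>\<^sup>2)
      + \<beta> * \<xi>\<^sup>2 * moment 2 (\<beta> * \<xi>\<^sup>2)) = 0"
    by (simp only: moment_kummer_identity mult_zero_right)
  with assms show ?thesis
    by (simp add: profile_def algebra_simps power2_eq_square power3_eq_cube)
qed

lemma profile_bigo:
  assumes "0 < \<beta>"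
  shows "profile \<beta> \<in> O[at_top](\<lambda>\<xi>. \<xi> powr (- 2 * p - 1))"
proof -
  have "filterlim (\<lambda>\<xi>. \<beta> * \<xi>\<^sup>2) at_top at_top"
    using assms by real_asymp
  with moment_zero_bigo have "(\<lambda>\<xi>. moment 0 (\<beta> * \<xi>\<^sup>2)) \<in> O[at_top](\<lambda>\<xi>. (\<beta> * \<xi>\<^sup>2) powr - (p + 1))"
    by (rule landau_o.big.compose)
  then have "profile \<beta> \<in> O[at_top](\<lambda>\<xi>. \<xi> * (\<beta> * \<xi>\<^sup>2) powr - (p + 1))"
    unfolding profile_def[abs_def] by (rule landau_o.big.mult_left)
  moreover have "(\<lambda>\<xi>. \<xi> * (\<beta> * \<xi>\<^sup>2) powr - (p + 1)) \<in> O[at_top](\<lambda>\<xi>. \<xi> powr (- 2 * p - 1))"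
    using assms by real_asymp
  ultimately show ?thesis
    by (rule landau_o.big_trans)
qed

end

lemma tendsto_zero_if_bigo_neg_powr:
  fixes f :: "real \<Rightarrow> real"
  assumes "f \<in> O[at_top](\<lambda>x. x powr a)" "a < 0"
  shows "(f \<longlongrightarrow> 0) at_top"
proof -
  have "(\<lambda>x::real. x powr a) \<in> o[at_top](\<lambda>_. 1)"
    using assms(2) by real_asymp
  with assms(1) have "f \<in> o[at_top](\<lambda>_. 1)"
    by (rule landau_o.big_small_trans)
  then show ?thesis
    using smalloD_tendsto by fastforce
qed

lemma decaying_solution_exists:
  fixes \<mu> :: real
  assumes "1/3 < \<mu>" "\<mu> < 1"
  shows "\<exists>f f' f'' :: real \<Rightarrow> real.
     (\<forall>\<xi>\<ge>0. (f has_real_derivative f' \<xi>) (at \<xi> within {0..}) \<and>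
               (f' has_real_derivative f'' \<xi>) (at \<xi> within {0..}) \<and>
               (\<mu> - 1) * f \<xi> - \<mu> * \<xi> * f' \<xi> = f'' \<xi>) \<and>
     f 0 = 0 \<and> (\<forall>\<xi>>0. 0 < f \<xi>) \<and> f \<in> O[at_top](\<lambda>\<xi>. \<xi> powr (1 - 1/\<mu>))"
proof -
  define p where "p = 1 / (2 * \<mu>) - 1"
  define q where "q = 1 / 2 - 1 / (2 * \<mu>)"
  define \<beta> where "\<beta> = \<mu> / 2"
  have \<mu>_pos: "0 < \<mu>" using assms by simp
  interpret beta_weight p q
    using assms by unfold_locales (simp_all add: p_def q_def field_simps)
  have \<beta>_pos: "0 < \<beta>" using \<mu>_pos by (simp add: \<beta>_def)
  define f' where "f' = (\<lambda>\<xi>. moment 0 (\<beta> * \<xi>\<^sup>2) - 2 * \<beta> * \<xi>\<^sup>2 * moment 1 (\<beta> * \<xi>\<^sup>2))"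
  define f'' where
    "f'' = (\<lambda>\<xi>. 4 * \<beta>\<^sup>2 * \<xi>^3 * moment 2 (\<beta> * \<xi>\<^sup>2) - 6 * \<beta> * \<xi> * moment 1 (\<beta> * \<xi>\<^sup>2))"
  have "(profile \<beta> has_real_derivative f' \<xi>) (at \<xi> within {0..})"
    and "(f' has_real_derivative f'' \<xi>) (at \<xi> within {0..})" if "0 \<le> \<xi>" for \<xi>
    using that \<beta>_pos has_real_derivative_profile has_real_derivative_profile_derivative
    unfolding f'_def f''_def by simp_all
  moreover have "(\<mu> - 1) * profile \<beta> \<xi> - \<mu> * \<xi> * f' \<xi> = f'' \<xi>" for \<xi>
  proof -
    have damping: "\<mu> - 1 = 2 * \<beta> * (1 - 2 * (p + 1))" and drift: "\<mu> = 2 * \<beta>"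
      using \<mu>_pos by (simp_all add: \<beta>_def p_def field_simps)
    show ?thesis
      unfolding f'_def f''_def
      by (subst damping, subst drift, rule profile_ode[symmetric]) (simp add: p_def q_def)
  qed
  moreover have "profile \<beta> \<in> O[at_top](\<lambda>\<xi>. \<xi> powr (1 - 1/\<mu>))"
    using profile_bigo[OF \<beta>_pos] by (simp add: p_def)
  moreover have "profile \<beta> 0 = 0"
    by (simp add: profile_def)
  ultimately show ?thesis
    using profile_pos by blast
qed

lemma gaussian_solution:
  fixes \<xi> :: real
  shows "((\<lambda>\<xi>. \<xi> * exp (- (\<xi>^2) / 6)) has_real_derivative (1 - \<xi>^2 / 3) * exp (- (\<xi>^2) / 6)) (at \<xi> within S)"
    and "((\<lambda>\<xi>. (1 - \<xi>^2 / 3) * exp (- (\<xi>^2) / 6)) has_real_derivative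
      (\<xi>^3 / 9 - \<xi>) * exp (- (\<xi>^2) / 6)) (at \<xi> within S)"
    and "(1/3 - 1) * (\<xi> * exp (- (\<xi>^2) / 6)) - 1/3 * \<xi> * ((1 - \<xi>^2 / 3) * exp (- (\<xi>^2) / 6))
      = (\<xi>^3 / 9 - \<xi>) * exp (- (\<xi>^2) / 6)"
  by (auto intro!: derivative_eq_intros simp: field_simps power2_eq_square power3_eq_cube)

theorem proposition2p1:
  fixes \<mu> :: real
  assumes "1/3 \<le> \<mu>" and "\<mu> < 1"
  shows "\<exists>f f' f'' :: real \<Rightarrow> real.
     (\<forall>\<xi>\<ge>0. (f has_real_derivative f' \<xi>) (at \<xi> within {0..}) \<and>
               (f' has_real_derivative f'' \<xi>) (at \<xi> within {0..}) \<and>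
               (\<mu> - 1) * f \<xi> - \<mu> * \<xi> * f' \<xi> = f'' \<xi>) \<and>
     f 0 = 0 \<and>
     (f \<longlongrightarrow> 0) at_top \<and>
     (\<forall>\<xi>>0. f \<xi> > 0) \<and>
     (1/3 < \<mu> \<longrightarrow> f \<in> O[at_top](\<lambda>\<xi>. \<xi> powr (1 - 1/\<mu>))) \<and>
     (\<mu> = 1/3 \<longrightarrow> (\<forall>\<xi>\<ge>0. f \<xi> = \<xi> * exp (- (\<xi>^2) / 6)))"
proof (cases "\<mu> = 1/3")
  case True
  let ?f = "\<lambda>\<xi>::real. \<xi> * exp (- (\<xi>^2) / 6)"
  have "(?f \<longlongrightarrow> 0) at_top"
    by real_asymp
  show ?thesis
    unfolding True
  proof (rule exI[of _ ?f], rule exI[of _ "\<lambda>\<xi>. (1 - \<xi>^2 / 3) * exp (- (\<xi>^2) / 6)"],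
      rule exI[of _ "\<lambda>\<xi>. (\<xi>^3 / 9 - \<xi>) * exp (- (\<xi>^2) / 6)"])
  qed (use gaussian_solution \<open>(?f \<longlongrightarrow> 0) at_top\<close> in auto)
next
  case False
  with assms have "1/3 < \<mu>" by simp
  with assms(2) obtain f f' f'' :: "real \<Rightarrow> real" where
    "\<forall>\<xi>\<ge>0. (f has_real_derivative f' \<xi>) (at \<xi> within {0..}) \<and>
               (f' has_real_derivative f'' \<xi>) (at \<xi> within {0..}) \<and>
               (\<mu> - 1) * f \<xi> - \<mu> * \<xi> * f' \<xi> = f'' \<xi>"
    and "f 0 = 0" "\<forall>\<xi>>0. 0 < f \<xi>" and decay: "f \<in> O[at_top](\<lambda>\<xi>. \<xi> powr (1 - 1/\<mu>))"
    using decaying_solution_exists by blast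
  moreover have "(f \<longlongrightarrow> 0) at_top"
    using decay \<open>1/3 < \<mu>\<close> assms(2) by (intro tendsto_zero_if_bigo_neg_powr) (auto simp: field_simps)
  ultimately show ?thesis
    using False by blast
qed

end
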